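(* Let $\mathcal{T}$ be an $l$-eligible microdata table and run the algorithm described in the context (arbitrary tie-breaking). If the algorithm terminates during Phase Two, then the final residue set $\ddot{R}$ together with the remaining groups is a feasible solution of the reformulated tuple minimization problem and $|\ddot{R}| \le OPT + l - 1$.
   Context: A microdata table $\mathcal{T}$ is a multiset of $n$ tuples with values on $d$ quasi-identifier (QI) attributes and one sensitive attribute (SA). For a multiset $Q$ and SA value $v$, $h(Q,v)$ is the number of tuples in $Q$ with SA value $v$, $h(Q)=\max_v h(Q,v)$, pillars of $Q$ are the $v$ with $h(Q,v)=h(Q)$; $Q$ is $l$-eligible if $|Q|\ge l\cdot h(Q)$. Let $Q_1,\dots,Q_s$ be the maximal classes of tuples of $\mathcal{T}$ with identical values on all QI attributes. Reformulated tuple minimization: choose sub-multisets $Q'_i\subseteq Q_i$ and $R'=\mathcal{T}\setminus\bigcup_i Q'_i$ with all $Q'_i$ and $R'$ $l$-eligible, minimizing $|R'|$; $OPT$ is the minimum. The algorithm only moves tuples from the groups into a set $R$ (initially empty). Phase One: for each $i$, while $Q_i$ is not $l$-eligible, move a tuple of a pillar of $Q_i$ to $R$; if then $R$ is $l$-eligible, terminate. Phase Two terminology (w.r.t. current state): a group $Q$ is thin if $|Q|=l\cdot h(Q)$ and fat if $|Q|\ge l\cdot h(Q)+1$; $Q$ is conflicting if some pillar of $Q$ is a pillar of $R$; $Q$ is dead if thin and conflicting, alive otherwise; an SA value $v$ is alive if some alive group $Q$ has $h(Q,v)>0$. Phase Two iterates: if no SA value is alive, Phase Two ends (go to Phase Three).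 Otherwise pick an alive SA value $v$ minimizing $h(R,v)$ and an alive group $Q$ with $h(Q,v)>0$ (ties arbitrary); if $Q$ is fat move one tuple with SA value $v$ from $Q$ to $R$; if $Q$ is thin move one tuple of each pillar of $Q$ to $R$. If $R$ is now $l$-eligible, the algorithm terminates. *)

theory Defs
  imports "HOL-Library.Multiset"
begin

text \<open>A tuple is a pair (QI value, SA value); the QI value stands for the vector of
  values on all d QI attributes. A table is a multiset of tuples.\<close>

definition hv :: "('q \<times> 's) multiset \<Rightarrow> 's \<Rightarrow> nat" where
  "hv Q v = count (image_mset snd Q) v"

definition hmax :: "('q \<times> 's) multiset \<Rightarrow> nat" where
  "hmax Q = Max (insert 0 (hv Q ` snd ` set_mset Q))"

definition pillar :: "('q \<times> 's) multiset \<Rightarrow> 's \<Rightarrow> bool" where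
  "pillar Q v \<longleftrightarrow> hv Q v = hmax Q"

definition eligible :: "nat \<Rightarrow> ('q \<times> 's) multiset \<Rightarrow> bool" where
  "eligible l Q \<longleftrightarrow> size Q \<ge> l * hmax Q"

definition QIs :: "('q \<times> 's) multiset \<Rightarrow> 'q set" where
  "QIs T = fst ` set_mset T"

definition qclass :: "('q \<times> 's) multiset \<Rightarrow> 'q \<Rightarrow> ('q \<times> 's) multiset" where
  "qclass T q = filter_mset (\<lambda>t. fst t = q) T"

definition is_solution ::
  "nat \<Rightarrow> ('q \<times> 's) multiset \<Rightarrow> ('q \<Rightarrow> ('q \<times> 's) multiset) \<Rightarrow> ('q \<times> 's) multiset \<Rightarrow> bool" where
  "is_solution l T Q' R' \<longleftrightarrow>
     (\<forall>q\<in>QIs T. Q' q \<subseteq># qclass T q \<and> eligible l (Q' q)) \<and>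
     R' = T - (\<Sum>q\<in>QIs T. Q' q) \<and> eligible l R'"

definition OPT :: "nat \<Rightarrow> ('q \<times> 's) multiset \<Rightarrow> nat" where
  "OPT l T = (LEAST n. \<exists>Q' R'. is_solution l T Q' R' \<and> size R' = n)"

text \<open>Algorithm state: the multiset R of tuples moved so far. The current group of QI
  value q consists of the tuples of its class not yet moved into R.\<close>
definition grp :: "('q \<times> 's) multiset \<Rightarrow> ('q \<times> 's) multiset \<Rightarrow> 'q \<Rightarrow> ('q \<times> 's) multiset" where
  "grp T R q = qclass (T - R) q"

definition p1_step :: "nat \<Rightarrow> ('q \<times> 's) multiset \<Rightarrow> ('q \<times> 's) multiset \<Rightarrow> ('q \<times> 's) multiset \<Rightarrow> bool" where
  "p1_step l T R R' \<longleftrightarrow>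
     (\<exists>q\<in>QIs T. \<not> eligible l (grp T R q) \<and>
        (\<exists>v. pillar (grp T R q) v \<and> (q, v) \<in># grp T R q \<and> R' = R + {#(q, v)#}))"

definition thin :: "nat \<Rightarrow> ('q \<times> 's) multiset \<Rightarrow> bool" where
  "thin l Q \<longleftrightarrow> size Q = l * hmax Q"

definition fat :: "nat \<Rightarrow> ('q \<times> 's) multiset \<Rightarrow> bool" where
  "fat l Q \<longleftrightarrow> size Q \<ge> l * hmax Q + 1"

definition conflicting :: "('q \<times> 's) multiset \<Rightarrow> ('q \<times> 's) multiset \<Rightarrow> bool" where
  "conflicting R Q \<longleftrightarrow> (\<exists>v. pillar Q v \<and> pillar R v)"

definition alive_grp :: "nat \<Rightarrow> ('q \<times> 's) multiset \<Rightarrow> ('q \<times> 's) multiset \<Rightarrow> 'q \<Rightarrow> bool" where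
  "alive_grp l T R q \<longleftrightarrow> q \<in> QIs T \<and> \<not> (thin l (grp T R q) \<and> conflicting R (grp T R q))"

definition alive_val :: "nat \<Rightarrow> ('q \<times> 's) multiset \<Rightarrow> ('q \<times> 's) multiset \<Rightarrow> 's \<Rightarrow> bool" where
  "alive_val l T R v \<longleftrightarrow> (\<exists>q. alive_grp l T R q \<and> hv (grp T R q) v > 0)"

text \<open>Phase Two: one iteration, executed only while R is not yet l-eligible
  (otherwise the algorithm has terminated).\<close>
definition p2_step :: "nat \<Rightarrow> ('q \<times> 's) multiset \<Rightarrow> ('q \<times> 's) multiset \<Rightarrow> ('q \<times> 's) multiset \<Rightarrow> bool" where
  "p2_step l T R R' \<longleftrightarrow> \<not> eligible l R \<and>
     (\<exists>v q. alive_val l T R v \<and> (\<forall>u. alive_val l T R u \<longrightarrow> hv R v \<le> hv R u) \<and>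
        alive_grp l T R q \<and> hv (grp T R q) v > 0 \<and>
        (if fat l (grp T R q) then R' = R + {#(q, v)#}
         else R' = R + mset_set ((\<lambda>u. (q, u)) ` {u. pillar (grp T R q) u})))"

end

theory Submission
  imports Defs
begin

text \<open>
  Phase One only removes a pillar tuple from a group that is not \<open>l\<close>-eligible, and an
  \<open>l\<close>-eligible sub-multiset of such a group cannot contain all tuples of one of its pillars
  (it would have the same maximal frequency but fewer tuples). Hence every \<open>l\<close>-eligible
  sub-multiset of a QI class survives inside the current group, so every feasible residue
  \<open>R'\<close> contains the Phase One residue \<open>R\<^sub>1\<close>, and \<open>OPT \<ge> l \<cdot> h(R') \<ge> l \<cdot> h(R\<^sub>1)\<close>.

  Phase Two keeps all groups \<open>l\<close>-eligible and never raises \<open>h(R)\<close>: a fat group gives up a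
  tuple whose SA value is below \<open>h(R)\<close> (an eligible group always has such a value when \<open>R\<close>
  is not eligible), a thin alive group one tuple of each of its at most \<open>l\<close> pillars, none of
  which is a pillar of \<open>R\<close>. So before the last move \<open>|R| < l \<cdot> h(R\<^sub>1)\<close>, and the final
  residue has fewer than \<open>l \<cdot> h(R\<^sub>1) + l \<le> OPT + l\<close> tuples.
\<close>

lemma hv_add: "hv (A + B) v = hv A v + hv B v"
  by (simp add: hv_def)

lemma hv_mono: "A \<subseteq># B \<Longrightarrow> hv A v \<le> hv B v"
  by (simp add: hv_def image_mset_subseteq_mono mset_subset_eq_count)

lemma hv_diff: "A \<subseteq># G \<Longrightarrow> hv (G - A) u = hv G u - hv A u"
  by (simp add: hv_def image_mset_Diff image_mset_subseteq_mono)

lemma hv_pos_iff: "0 < hv G w \<longleftrightarrow> w \<in> snd ` set_mset G"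
  by (simp add: hv_def)

lemma hv_le_hmax: "hv Q v \<le> hmax Q"
proof (cases "v \<in> snd ` set_mset Q")
  case True
  then show ?thesis
    unfolding hmax_def by (intro Max_ge) auto
next
  case False
  then have "hv Q v = 0"
    by (simp add: hv_def count_eq_zero_iff)
  then show ?thesis
    by simp
qed

lemma hmax_le_iff: "hmax Q \<le> k \<longleftrightarrow> (\<forall>v. hv Q v \<le> k)"
proof
  assume "hmax Q \<le> k"
  then show "\<forall>v. hv Q v \<le> k"
    using hv_le_hmax[of Q] order_trans by blast
next
  assume "\<forall>v. hv Q v \<le> k"
  then show "hmax Q \<le> k"
    unfolding hmax_def by (subst Max_le_iff) auto
qed

lemma hmax_mono: "A \<subseteq># B \<Longrightarrow> hmax A \<le> hmax B"
  by (simp add: hmax_le_iff le_trans[OF hv_mono hv_le_hmax])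

lemma hmax_pos: "G \<noteq> {#} \<Longrightarrow> 0 < hmax G"
  using hv_le_hmax hv_pos_iff by (metis gr0I image_eqI le_zero_eq multiset_nonemptyE)

lemma sum_hv_eq_size_filter:
  "finite U \<Longrightarrow> (\<Sum>u\<in>U. hv M u) = size (filter_mset (\<lambda>t. snd t \<in> U) M)"
proof (induction M)
  case empty
  then show ?case by (simp add: hv_def)
next
  case (add x M)
  have "(\<Sum>u\<in>U. hv (add_mset x M) u) = (\<Sum>u\<in>U. hv M u + (if u = snd x then 1 else 0))"
    by (intro sum.cong) (auto simp: hv_def)
  also have "\<dots> = (\<Sum>u\<in>U. hv M u) + (if snd x \<in> U then 1 else 0)"
    using add.prems by (simp add: sum.distrib)
  finally show ?case
    using add by simp
qed

lemma sum_hv_le_size: "finite U \<Longrightarrow> (\<Sum>u\<in>U. hv M u) \<le> size M"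
  by (simp add: sum_hv_eq_size_filter size_filter_mset_lesseq)

lemma size_eq_sum_hv:
  assumes "finite U" and "snd ` set_mset M \<subseteq> U"
  shows "size M = (\<Sum>u\<in>U. hv M u)"
proof -
  have "filter_mset (\<lambda>t. snd t \<in> U) M = filter_mset (\<lambda>t. True) M"
    using assms(2) by (intro filter_mset_cong) auto
  then show ?thesis
    using assms(1) by (simp add: sum_hv_eq_size_filter)
qed

lemma hv_eq_count_if_subset_qclass:
  assumes "G \<subseteq># qclass T q"
  shows "hv G u = count G (q, u)"
proof -
  have "filter_mset (\<lambda>t. fst t = q) G = filter_mset (\<lambda>t. True) G"
    using set_mset_mono[OF assms] by (intro filter_mset_cong) (auto simp: qclass_def)
  then have "hv G u = hv (filter_mset (\<lambda>t. fst t = q) G) u"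
    by simp
  also have "\<dots> = count G (q, u)"
    unfolding hv_def by (induction G) auto
  finally show ?thesis .
qed

lemma grp_subset_qclass: "grp T R q \<subseteq># qclass T q"
  unfolding grp_def qclass_def by (simp add: multiset_filter_mono)

lemma grp_empty: "grp T {#} q = qclass T q"
  by (simp add: grp_def)

lemma grp_eq_empty_if_notin_QIs:
  assumes "q \<notin> QIs T"
  shows "grp T R q = {#}"
proof (rule multiset_eqI)
  fix x
  have "fst x = q \<Longrightarrow> count T x = 0"
    using assms by (force simp: QIs_def count_eq_zero_iff)
  then show "count (grp T R q) x = count {#} x"
    unfolding grp_def qclass_def by auto
qed

lemma grp_add:
  assumes "A \<subseteq># grp T R q"
  shows "grp T (R + A) q' = (if q' = q then grp T R q - A else grp T R q')"
proof (rule multiset_eqI)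
  fix x
  have "count A x \<le> count (grp T R q) x"
    using assms by (simp add: mset_subset_eq_count)
  then show "count (grp T (R + A) q') x = count (if q' = q then grp T R q - A else grp T R q') x"
    unfolding grp_def qclass_def by auto
qed

lemma add_subset_if_subset_grp:
  assumes "R \<subseteq># T" and "A \<subseteq># grp T R q"
  shows "R + A \<subseteq># T"
proof -
  have "A \<subseteq># T - R"
    using assms(2) unfolding grp_def qclass_def
    by (meson multiset_filter_subset subset_mset.order_trans)
  then show ?thesis
    using assms(1) by (metis subset_mset.add_diff_inverse subset_mset.add_left_mono)
qed

lemma sum_filter_mset_fst:
  "finite A \<Longrightarrow> (\<Sum>q\<in>A. filter_mset (\<lambda>t. fst t = q) M) = filter_mset (\<lambda>t. fst t \<in> A) M"
proof (induction A rule: finite_induct)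
  case empty
  then show ?case by (simp add: filter_mset_False)
next
  case (insert x F)
  then show ?case
    by (auto intro: multiset_eqI)
qed

lemma sum_grp: "(\<Sum>q\<in>QIs T. grp T R q) = T - R"
proof -
  have "(\<Sum>q\<in>QIs T. grp T R q) = filter_mset (\<lambda>t. fst t \<in> QIs T) (T - R)"
    unfolding grp_def qclass_def QIs_def by (rule sum_filter_mset_fst) simp
  also have "\<dots> = filter_mset (\<lambda>t. True) (T - R)"
    unfolding QIs_def by (intro filter_mset_cong) (auto dest: in_diffD)
  finally show ?thesis
    by simp
qed

lemma is_solution_grp:
  assumes "R \<subseteq># T" and "\<forall>q\<in>QIs T. eligible l (grp T R q)" and "eligible l R"
  shows "is_solution l T (grp T R) R"
proof -
  have "T - (T - R) = R"
    using assms(1) by (simp add: subset_mset.diff_diff_right)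
  then show ?thesis
    unfolding is_solution_def using assms grp_subset_qclass[of T R] by (simp add: sum_grp)
qed

lemma le_OPT:
  assumes "is_solution l T Q R" and "\<And>Q' R'. is_solution l T Q' R' \<Longrightarrow> n \<le> size R'"
  shows "n \<le> OPT l T"
proof -
  have "\<exists>Q' R'. is_solution l T Q' R' \<and> size R' = OPT l T"
    unfolding OPT_def by (rule LeastI_ex) (use assms(1) in blast)
  then obtain Q' R' where "is_solution l T Q' R'" and "size R' = OPT l T"
    by blast
  then show ?thesis
    using assms(2) by metis
qed

definition phase_one_inv :: "nat \<Rightarrow> ('q \<times> 's) multiset \<Rightarrow> ('q \<times> 's) multiset \<Rightarrow> bool" where
  "phase_one_inv l T R \<longleftrightarrow> R \<subseteq># T \<and>
     (\<forall>q Y. Y \<subseteq># qclass T q \<and> eligible l Y \<longrightarrow> Y \<subseteq># grp T R q)"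

lemma phase_one_inv_empty: "phase_one_inv l T {#}"
  by (simp add: phase_one_inv_def grp_empty)

lemma eligible_subset_misses_pillar_tuple:
  assumes Y: "Y \<subseteq># G" and G: "G \<subseteq># qclass T q" and "\<not> eligible l G"
    and "pillar G v" and "eligible l Y"
  shows "count Y (q, v) < count G (q, v)"
proof (rule ccontr)
  assume "\<not> ?thesis"
  then have "count Y (q, v) = count G (q, v)"
    using Y by (simp add: mset_subset_eq_count le_antisym)
  then have "hv Y v = hmax G"
    using \<open>pillar G v\<close> hv_eq_count_if_subset_qclass[OF G]
      hv_eq_count_if_subset_qclass[OF subset_mset.trans[OF Y G]]
    by (simp add: pillar_def)
  then have "hmax Y = hmax G"
    using hv_le_hmax[of Y v] hmax_mono[OF Y] by simp
  then show False
    using \<open>\<not> eligible l G\<close> \<open>eligible l Y\<close> size_mset_mono[OF Y] by (simp add: eligible_def)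
qed

lemma phase_one_inv_step:
  assumes inv: "phase_one_inv l T R" and step: "p1_step l T R R'"
  shows "phase_one_inv l T R'"
proof -
  obtain q v where ne: "\<not> eligible l (grp T R q)" and pil: "pillar (grp T R q) v"
    and mem: "(q, v) \<in># grp T R q" and R': "R' = R + {#(q, v)#}"
    using step unfolding p1_step_def by blast
  have single: "{#(q, v)#} \<subseteq># grp T R q"
    using mem by simp
  have grp_R': "grp T R' q' = (if q' = q then grp T R q - {#(q, v)#} else grp T R q')" for q'
    unfolding R' using single by (rule grp_add)
  have "R' \<subseteq># T"
    using inv add_subset_if_subset_grp[OF _ single] by (simp add: phase_one_inv_def R')
  moreover have "Y \<subseteq># grp T R' q'" if Y: "Y \<subseteq># qclass T q'" and el: "eligible l Y" for q' Y
  proof (cases "q' = q")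
    case True
    have sub: "Y \<subseteq># grp T R q"
      using inv Y el True by (simp add: phase_one_inv_def)
    have "count Y (q, v) < count (grp T R q) (q, v)"
      using eligible_subset_misses_pillar_tuple[OF sub grp_subset_qclass ne pil el] .
    then have "Y \<subseteq># grp T R q - {#(q, v)#}"
      using mset_subset_eq_count[OF sub] by (intro mset_subset_eqI) (auto simp: less_diff_conv)
    then show ?thesis
      using True by (simp add: grp_R')
  next
    case False
    then show ?thesis
      using inv Y el by (simp add: phase_one_inv_def grp_R')
  qed
  ultimately show ?thesis
    by (simp add: phase_one_inv_def)
qed

lemma phase_one_inv_reachable:
  "(p1_step l T)\<^sup>*\<^sup>* {#} R \<Longrightarrow> phase_one_inv l T R"
  by (induction rule: rtranclp_induct) (auto intro: phase_one_inv_empty phase_one_inv_step)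

lemma phase_one_residue_subset_solution:
  assumes inv: "phase_one_inv l T R" and sol: "is_solution l T Q' R'"
  shows "R \<subseteq># R'"
proof -
  have "Q' q \<subseteq># grp T R q" if "q \<in> QIs T" for q
    using inv sol that by (simp add: phase_one_inv_def is_solution_def)
  then have "count (\<Sum>q\<in>QIs T. Q' q) t \<le> count (\<Sum>q\<in>QIs T. grp T R q) t" for t
    unfolding count_sum by (intro sum_mono) (simp add: mset_subset_eq_count)
  then have "(\<Sum>q\<in>QIs T. Q' q) \<subseteq># T - R"
    by (simp add: mset_subset_eqI flip: sum_grp)
  then have "T - (T - R) \<subseteq># T - (\<Sum>q\<in>QIs T. Q' q)"
    by (auto simp: subseteq_mset_def intro: diff_le_mono2)
  then show ?thesis
    using inv sol by (simp add: phase_one_inv_def is_solution_def subset_mset.diff_diff_right)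
qed

lemma phase_one_lower_bound:
  assumes "phase_one_inv l T R" and sol: "is_solution l T Q' R'"
  shows "l * hmax R \<le> size R'"
proof -
  have "hmax R \<le> hmax R'"
    using hmax_mono phase_one_residue_subset_solution[OF assms] by blast
  moreover have "l * hmax R' \<le> size R'"
    using sol unfolding is_solution_def eligible_def by blast
  ultimately show ?thesis
    by (meson le_trans mult_le_mono2)
qed

lemma card_values_ge_if_eligible:
  assumes "eligible l G" and "G \<noteq> {#}"
  shows "l \<le> card (snd ` set_mset G)"
proof -
  define V where "V = snd ` set_mset G"
  have "size G = (\<Sum>w\<in>V. hv G w)"
    unfolding V_def by (rule size_eq_sum_hv) auto
  also have "\<dots> \<le> card V * hmax G"
    using sum_bounded_above[of V "hv G" "hmax G", OF hv_le_hmax] by simp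
  finally have "l * hmax G \<le> card V * hmax G"
    using assms(1) unfolding eligible_def by linarith
  then show ?thesis
    using hmax_pos[OF assms(2)] unfolding V_def by simp
qed

lemma ex_value_below_hmax:
  assumes "\<not> eligible l R" and "eligible l G" and "G \<noteq> {#}"
  shows "\<exists>w\<in>snd ` set_mset G. hv R w < hmax R"
proof (rule ccontr)
  define V where "V = snd ` set_mset G"
  assume "\<not> ?thesis"
  then have "\<forall>w\<in>V. hv R w = hmax R"
    using hv_le_hmax[of R] unfolding V_def by (meson le_neq_implies_less)
  then have "card V * hmax R = (\<Sum>w\<in>V. hv R w)"
    by simp
  also have "\<dots> \<le> size R"
    unfolding V_def by (rule sum_hv_le_size) simp
  finally have "l * hmax R \<le> size R"
    using card_values_ge_if_eligible[OF assms(2,3)] unfolding V_def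
    by (meson le_trans mult_le_mono1)
  then show False
    using assms(1) by (simp add: eligible_def)
qed

lemma eligible_diff_single_if_fat:
  assumes "fat l G"
  shows "eligible l (G - {#t#})"
proof -
  have "size G \<le> size (G - {#t#}) + 1"
    by (metis size_Diff_singleton_if le_diff_conv order_refl add_leD1)
  moreover have "l * hmax (G - {#t#}) \<le> l * hmax G"
    using hmax_mono[of "G - {#t#}" G] by simp
  ultimately show ?thesis
    using assms unfolding fat_def eligible_def by linarith
qed

definition pillar_tuples :: "'q \<Rightarrow> ('q \<times> 's) multiset \<Rightarrow> ('q \<times> 's) multiset" where
  "pillar_tuples q G = mset_set ((\<lambda>u. (q, u)) ` {u. pillar G u})"

lemma pillars_subset_values:
  assumes "G \<noteq> {#}"
  shows "{u. pillar G u} \<subseteq> snd ` set_mset G"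
proof
  fix u
  assume "u \<in> {u. pillar G u}"
  then show "u \<in> snd ` set_mset G"
    using hmax_pos[OF assms] by (simp add: pillar_def flip: hv_pos_iff)
qed

lemma finite_pillars: "G \<noteq> {#} \<Longrightarrow> finite {u. pillar G u}"
  using pillars_subset_values finite_subset by blast

lemma count_pillar_tuples:
  "G \<noteq> {#} \<Longrightarrow> count (pillar_tuples q G) (q', u) = (if q' = q \<and> pillar G u then 1 else 0)"
  by (auto simp: pillar_tuples_def finite_pillars count_mset_set')

lemma hv_pillar_tuples:
  assumes "G \<noteq> {#}"
  shows "hv (pillar_tuples q G) u = (if pillar G u then 1 else 0)"
proof -
  have "image_mset snd (pillar_tuples q G) = mset_set {u. pillar G u}"
    unfolding pillar_tuples_def by (subst image_mset_mset_set) (auto simp: inj_on_def image_image)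
  then show ?thesis
    using finite_pillars[OF assms] by (simp add: hv_def count_mset_set')
qed

lemma pillar_tuples_subset:
  assumes "G \<subseteq># qclass T q" and "G \<noteq> {#}"
  shows "pillar_tuples q G \<subseteq># G"
proof (rule mset_subset_eqI)
  fix x :: "'a \<times> 'b"
  obtain q' u where x: "x = (q', u)"
    by (cases x)
  have "pillar G u \<Longrightarrow> 1 \<le> count G (q, u)"
    using hmax_pos[OF assms(2)] hv_eq_count_if_subset_qclass[OF assms(1)] by (simp add: pillar_def)
  then show "count (pillar_tuples q G) x \<le> count G x"
    using assms(2) by (simp add: x count_pillar_tuples)
qed

lemma size_pillar_tuples: "G \<noteq> {#} \<Longrightarrow> size (pillar_tuples q G) = card {u. pillar G u}"
  by (simp add: pillar_tuples_def finite_pillars card_image inj_on_def)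

lemma card_pillars_le_if_thin:
  assumes "thin l G" and "G \<noteq> {#}"
  shows "card {u. pillar G u} \<le> l"
proof -
  have "card {u. pillar G u} * hmax G = (\<Sum>u\<in>{u. pillar G u}. hv G u)"
    by (simp add: pillar_def)
  also have "\<dots> \<le> size G"
    using finite_pillars[OF assms(2)] by (rule sum_hv_le_size)
  finally show ?thesis
    using assms hmax_pos[OF assms(2)] by (simp add: thin_def)
qed

lemma eligible_diff_pillar_tuples_if_thin:
  assumes G: "G \<subseteq># qclass T q" and "thin l G" and "G \<noteq> {#}"
  shows "eligible l (G - pillar_tuples q G)"
proof -
  have sub: "pillar_tuples q G \<subseteq># G"
    using G assms(3) by (rule pillar_tuples_subset)
  have "hv (G - pillar_tuples q G) u \<le> hmax G - 1" for u
    using hv_le_hmax[of G u] hv_diff[OF sub, of u] hv_pillar_tuples[OF assms(3), of q u]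
    by (auto simp: pillar_def)
  then have "hmax (G - pillar_tuples q G) \<le> hmax G - 1"
    by (simp add: hmax_le_iff)
  then have "l * hmax (G - pillar_tuples q G) \<le> l * hmax G - l"
    by (metis diff_mult_distrib2 mult.right_neutral mult_le_mono2)
  also have "\<dots> \<le> size G - size (pillar_tuples q G)"
    using assms(2) card_pillars_le_if_thin[OF assms(2,3)] size_pillar_tuples[OF assms(3), of q]
    by (simp add: thin_def)
  finally show ?thesis
    using sub by (simp add: eligible_def size_Diff_submset)
qed

definition phase_two_inv :: "nat \<Rightarrow> ('q \<times> 's) multiset \<Rightarrow> nat \<Rightarrow> ('q \<times> 's) multiset \<Rightarrow> bool" where
  "phase_two_inv l T h R \<longleftrightarrow> R \<subseteq># T \<and> (\<forall>q. eligible l (grp T R q)) \<and>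
     hmax R \<le> h \<and> size R < l * h + l"

lemma phase_two_inv_add:
  assumes inv: "phase_two_inv l T h R" and "\<not> eligible l R"
    and A: "A \<subseteq># grp T R q" and no_new_pillar: "\<forall>u. hv R u + hv A u \<le> hmax R"
    and "size A \<le> l" and "eligible l (grp T R q - A)"
  shows "phase_two_inv l T h (R + A)"
proof -
  have "hmax R \<le> h" and "R \<subseteq># T" and "\<forall>q. eligible l (grp T R q)"
    using inv by (simp_all add: phase_two_inv_def)
  have "size R < l * hmax R"
    using \<open>\<not> eligible l R\<close> by (simp add: eligible_def)
  also have "\<dots> \<le> l * h"
    using \<open>hmax R \<le> h\<close> by simp
  finally have "size (R + A) < l * h + l"
    using \<open>size A \<le> l\<close> by simp
  moreover have "hmax (R + A) \<le> hmax R"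
    using no_new_pillar by (simp add: hmax_le_iff hv_add)
  ultimately show ?thesis
    using assms(6) \<open>hmax R \<le> h\<close> \<open>R \<subseteq># T\<close> \<open>\<forall>q. eligible l (grp T R q)\<close>
      add_subset_if_subset_grp[OF _ A]
    by (simp add: phase_two_inv_def grp_add[OF A])
qed

lemma phase_two_inv_add_fat:
  assumes inv: "phase_two_inv l T h R" and ne: "\<not> eligible l R"
    and fat: "fat l (grp T R q)" and mem: "(q, v) \<in># grp T R q" and low: "hv R v < hmax R"
  shows "phase_two_inv l T h (R + {#(q, v)#})"
proof -
  have "hv {#(q, v)#} u = (if u = v then 1 else 0)" for u
    by (simp add: hv_def)
  then have "\<forall>u. hv R u + hv {#(q, v)#} u \<le> hmax R"
    using low hv_le_hmax[of R] by simp
  moreover have "size {#(q, v)#} \<le> l"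
    using ne by (cases l) (simp_all add: eligible_def)
  ultimately show ?thesis
    using mem eligible_diff_single_if_fat[OF fat] by (intro phase_two_inv_add[OF inv ne]) simp_all
qed

lemma phase_two_inv_add_thin:
  assumes inv: "phase_two_inv l T h R" and ne: "\<not> eligible l R"
    and thin: "thin l (grp T R q)" and nonempty: "grp T R q \<noteq> {#}"
    and "\<not> conflicting R (grp T R q)"
  shows "phase_two_inv l T h (R + pillar_tuples q (grp T R q))"
proof -
  let ?G = "grp T R q"
  have "\<forall>u. pillar ?G u \<longrightarrow> hv R u < hmax R"
    using \<open>\<not> conflicting R ?G\<close> hv_le_hmax[of R] by (auto simp: conflicting_def pillar_def le_less)
  then have "\<forall>u. hv R u + hv (pillar_tuples q ?G) u \<le> hmax R"
    using hv_le_hmax[of R] by (simp add: hv_pillar_tuples[OF nonempty] Suc_leI)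
  moreover have "size (pillar_tuples q ?G) \<le> l"
    using size_pillar_tuples[OF nonempty] card_pillars_le_if_thin[OF thin nonempty] by simp
  ultimately show ?thesis
    using pillar_tuples_subset[OF grp_subset_qclass nonempty]
      eligible_diff_pillar_tuples_if_thin[OF grp_subset_qclass thin nonempty]
    by (intro phase_two_inv_add[OF inv ne])
qed

lemma phase_two_inv_step:
  assumes inv: "phase_two_inv l T h R" and step: "p2_step l T R R'"
  shows "phase_two_inv l T h R'"
proof -
  obtain v q where ne: "\<not> eligible l R"
    and vmin: "\<forall>u. alive_val l T R u \<longrightarrow> hv R v \<le> hv R u"
    and alive: "alive_grp l T R q" and pos: "0 < hv (grp T R q) v"
    and R': "if fat l (grp T R q) then R' = R + {#(q, v)#}
             else R' = R + mset_set ((\<lambda>u. (q, u)) ` {u. pillar (grp T R q) u})"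
    using step unfolding p2_step_def by blast
  define G where "G = grp T R q"
  have "eligible l G"
    using inv by (simp add: G_def phase_two_inv_def)
  have "G \<noteq> {#}"
    using pos by (auto simp: G_def hv_def)
  show ?thesis
  proof (cases "fat l G")
    case True
    obtain w where "w \<in> snd ` set_mset G" and "hv R w < hmax R"
      using ex_value_below_hmax[OF ne \<open>eligible l G\<close> \<open>G \<noteq> {#}\<close>] by blast
    then have "0 < hv G w"
      by (simp add: hv_pos_iff)
    then have "alive_val l T R w"
      unfolding alive_val_def G_def using alive by blast
    then have "hv R v < hmax R"
      using vmin \<open>hv R w < hmax R\<close> by (meson le_less_trans)
    moreover have "(q, v) \<in># G"
      using pos hv_eq_count_if_subset_qclass[OF grp_subset_qclass, of T R q v] by (simp add: G_def)
    ultimately show ?thesis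
      using phase_two_inv_add_fat[OF inv ne] True R' by (simp add: G_def)
  next
    case False
    then have "thin l G"
      using \<open>eligible l G\<close> by (simp add: thin_def fat_def eligible_def)
    moreover have "\<not> conflicting R G"
      using alive \<open>thin l G\<close> by (simp add: alive_grp_def G_def)
    ultimately show ?thesis
      using phase_two_inv_add_thin[OF inv ne] \<open>G \<noteq> {#}\<close> False R'
      by (simp add: G_def pillar_tuples_def)
  qed
qed

lemma phase_two_inv_reachable:
  "(p2_step l T)\<^sup>*\<^sup>* R R' \<Longrightarrow> phase_two_inv l T h R \<Longrightarrow> phase_two_inv l T h R'"
  by (induction rule: rtranclp_induct) (auto intro: phase_two_inv_step)

theorem corollary3:
  fixes l :: nat and T :: "('q \<times> 's) multiset" and R1 Rf :: "('q \<times> 's) multiset"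
  assumes "eligible l T"
    and "(p1_step l T)\<^sup>*\<^sup>* {#} R1"
    and "\<forall>q\<in>QIs T. eligible l (grp T R1 q)"
    and "\<not> eligible l R1"
    and "(p2_step l T)\<^sup>*\<^sup>* R1 Rf"
    and "eligible l Rf"
  shows "is_solution l T (grp T Rf) Rf \<and> size Rf \<le> OPT l T + l - 1"
proof -
  have one: "phase_one_inv l T R1"
    using assms(2) by (rule phase_one_inv_reachable)
  have "eligible l (grp T R1 q)" for q
    using assms(3) grp_eq_empty_if_notin_QIs[of q T R1]
    by (cases "q \<in> QIs T") (simp_all add: eligible_def hmax_def)
  then have "phase_two_inv l T (hmax R1) R1"
    using one assms(4) by (auto simp: phase_one_inv_def phase_two_inv_def eligible_def)
  then have two: "phase_two_inv l T (hmax R1) Rf"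
    using assms(5) phase_two_inv_reachable by blast
  then have sol: "is_solution l T (grp T Rf) Rf"
    using assms(6) by (simp add: phase_two_inv_def is_solution_grp)
  have "l * hmax R1 \<le> OPT l T"
    using le_OPT[OF sol] phase_one_lower_bound[OF one] by blast
  moreover have "size Rf < l * hmax R1 + l"
    using two by (simp add: phase_two_inv_def)
  ultimately show ?thesis
    using sol by linarith
qed

end
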